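(* Let $w,w'\in[0,1]$ with $w+w'=1$. For every interval $\textbf{A}=[\underline{a},\overline{a}]\in I(\mathbb{R})$, $(w\underline{a}+w'\overline{a})\odot[\underline{a},\overline{a}]\nprec\textbf{0}$.
   Context: $I(\mathbb{R})$ is the set of closed bounded intervals; for $\lambda\in\mathbb{R}$, $\lambda\odot[\underline{a},\overline{a}]=[\lambda\underline{a},\lambda\overline{a}]$ if $\lambda\ge0$ and $[\lambda\overline{a},\lambda\underline{a}]$ if $\lambda<0$; $\textbf{0}=[0,0]$. $\textbf{A}\prec\textbf{B}$ iff $\underline{a}\le\underline{b}$, $\overline{a}\le\overline{b}$ and $\textbf{A}\ne\textbf{B}$; $\nprec$ is its negation. *)

theory Defs
  imports Main "HOL.Real"
begin

typedef interval = "{p :: real \<times> real. fst p \<le> snd p}"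
  by auto

definition lo :: "interval \<Rightarrow> real" where "lo A = fst (Rep_interval A)"
definition hi :: "interval \<Rightarrow> real" where "hi A = snd (Rep_interval A)"

definition mk_interval :: "real \<Rightarrow> real \<Rightarrow> interval" where
  "mk_interval a b = Abs_interval (a, b)"

definition smult_I :: "real \<Rightarrow> interval \<Rightarrow> interval" (infixr "\<odot>" 75) where
  "c \<odot> A = (if c \<ge> 0 then mk_interval (c * lo A) (c * hi A)
             else mk_interval (c * hi A) (c * lo A))"

definition zero_I :: interval where "zero_I = mk_interval 0 0"

definition prec_I :: "interval \<Rightarrow> interval \<Rightarrow> bool" (infix "\<prec>" 50) where
  "A \<prec> B \<longleftrightarrow> lo A \<le> lo B \<and> hi A \<le> hi B \<and> A \<noteq> B"

end

theory Submission
  imports Defs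
begin

(* The point c = w lo A + w' hi A lies in A, and for every c in A the interval c \<odot> A has
   upper end at least c^2. So c \<odot> A \<prec> 0 would force c = 0, but 0 \<odot> A is the zero
   interval itself. *)

lemma hi_mk_interval: "a \<le> b \<Longrightarrow> hi (mk_interval a b) = b"
  by (simp add: hi_def mk_interval_def Abs_interval_inverse)

lemma lo_le_hi: "lo A \<le> hi A"
  using Rep_interval[of A] by (simp add: lo_def hi_def)

lemma hi_zero_I [simp]: "hi zero_I = 0"
  by (simp add: zero_I_def hi_mk_interval)

lemma hi_smult_I: "hi (c \<odot> A) = max (c * lo A) (c * hi A)"
proof (cases "c \<ge> 0")
  case True
  then have "c * lo A \<le> c * hi A"
    using lo_le_hi by (rule mult_left_mono[rotated])
  with True show ?thesis
    by (simp add: smult_I_def hi_mk_interval max_def)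
next
  case False
  then have "c * hi A \<le> c * lo A"
    using lo_le_hi by (simp add: mult_left_mono_neg)
  with False show ?thesis
    by (simp add: smult_I_def hi_mk_interval max_def)
qed

lemma smult_I_zero_left: "0 \<odot> A = zero_I"
  by (simp add: smult_I_def zero_I_def)

lemma square_le_hi_smult_I:
  assumes "lo A \<le> c" "c \<le> hi A"
  shows "c\<^sup>2 \<le> hi (c \<odot> A)"
proof (cases "c \<ge> 0")
  case True
  then have "c * c \<le> c * hi A"
    using assms(2) by (rule mult_left_mono[rotated])
  then show ?thesis
    by (simp add: hi_smult_I power2_eq_square)
next
  case False
  then have "c * c \<le> c * lo A"
    using assms(1) by (simp add: mult_left_mono_neg)
  then show ?thesis
    by (simp add: hi_smult_I power2_eq_square)
qed

lemma not_smult_I_prec_zero: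
  assumes "lo A \<le> c" "c \<le> hi A"
  shows "\<not> (c \<odot> A \<prec> zero_I)"
proof
  assume prec: "c \<odot> A \<prec> zero_I"
  then have "hi (c \<odot> A) \<le> 0"
    by (simp add: prec_I_def)
  then have "c\<^sup>2 \<le> 0"
    using square_le_hi_smult_I[OF assms] by linarith
  then have "c = 0"
    by simp
  with prec show False
    by (simp add: prec_I_def smult_I_zero_left)
qed

theorem lemma5p1:
  fixes w w' :: real and A :: interval
  assumes "0 \<le> w" "w \<le> 1" "0 \<le> w'" "w' \<le> 1" "w + w' = 1"
  shows "\<not> ((w * lo A + w' * hi A) \<odot> A \<prec> zero_I)"
proof (rule not_smult_I_prec_zero)
  have "- (w * lo A + w' * hi A) \<le> - lo A"
    using convex_bound_le[of "- lo A" "- lo A" "- hi A" w w'] lo_le_hi assms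
    by (simp add: algebra_simps)
  then show "lo A \<le> w * lo A + w' * hi A"
    by simp
  show "w * lo A + w' * hi A \<le> hi A"
    using convex_bound_le[of "lo A" "hi A" "hi A" w w'] lo_le_hi assms by simp
qed

end
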